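(* Every unit interval graph has twin-width at most $2$.
   Context: A unit interval graph is the intersection graph of a finite family of closed intervals of the real line all having the same length. A trigraph $H$ consists of a vertex set $V(H)$ and two disjoint sets of unordered pairs of distinct vertices: black edges $E(H)$ and red edges $R(H)$. Two vertices are adjacent (neighbors) if they are joined by a black or a red edge. The red graph of $H$ is the graph $(V(H),R(H))$; $H$ is a $d$-trigraph if its red graph has maximum degree at most $d$. A graph is a trigraph with no red edges. Contracting two distinct vertices $u,v$ of a trigraph $H$ yields the trigraph obtained by deleting $u$ and $v$ and adding a new vertex $z$ such that, for every other vertex $x$: $zx$ is a black edge if both $ux$ and $vx$ are black edges; $zx$ is not an edge if $x$ is adjacent to neither $u$ nor $v$; and $zx$ is a red edge otherwise. All edges not incident to $u$ or $v$ are unchanged. A $d$-sequence of an $n$-vertex graph $G$ is a sequence of $d$-trigraphs $G=G_n,G_{n-1},\dots,G_1$ such that $G_1$ has a single vertex and each $G_{i-1}$ is obtained from $G_i$ by one contraction (so $G_i$ has $i$ vertices). The twin-width $\mathrm{tww}(G)$ of $G$ is the minimum $d$ such that $G$ admits a $d$-sequence. *)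

theory Defs
  imports Complex_Main
begin

text \<open>A trigraph is a triple (V, B, R): a vertex set, black edges and red edges;
  edges are unordered pairs of distinct vertices, represented as 2-element sets.\<close>
type_synonym 'a trigraph = "'a set \<times> 'a set set \<times> 'a set set"

definition verts :: "'a trigraph \<Rightarrow> 'a set" where "verts H = fst H"
definition black :: "'a trigraph \<Rightarrow> 'a set set" where "black H = fst (snd H)"
definition red :: "'a trigraph \<Rightarrow> 'a set set" where "red H = snd (snd H)"

definition wf_trigraph :: "'a trigraph \<Rightarrow> bool" where
  "wf_trigraph H \<longleftrightarrow> finite (verts H)
     \<and> (\<forall>e \<in> black H \<union> red H. e \<subseteq> verts H \<and> card e = 2)
     \<and> black H \<inter> red H = {}"

definition is_graph :: "'a trigraph \<Rightarrow> bool" where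
  "is_graph G \<longleftrightarrow> wf_trigraph G \<and> red G = {}"

definition adjacent :: "'a trigraph \<Rightarrow> 'a \<Rightarrow> 'a \<Rightarrow> bool" where
  "adjacent H x y \<longleftrightarrow> {x, y} \<in> black H \<union> red H"

definition red_degree :: "'a trigraph \<Rightarrow> 'a \<Rightarrow> nat" where
  "red_degree H x = card {y \<in> verts H. {x, y} \<in> red H}"

definition is_d_trigraph :: "nat \<Rightarrow> 'a trigraph \<Rightarrow> bool" where
  "is_d_trigraph d H \<longleftrightarrow> wf_trigraph H \<and> (\<forall>x \<in> verts H. red_degree H x \<le> d)"

text \<open>Contract u and v into the vertex z (z must not be another vertex of H).\<close>
definition contract :: "'a trigraph \<Rightarrow> 'a \<Rightarrow> 'a \<Rightarrow> 'a \<Rightarrow> 'a trigraph" where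
  "contract H u v z =
    (let W = verts H - {u, v} in
     (W \<union> {z},
      {e \<in> black H. e \<subseteq> W} \<union>
        {{z, x} | x. x \<in> W \<and> {u, x} \<in> black H \<and> {v, x} \<in> black H},
      {e \<in> red H. e \<subseteq> W} \<union>
        {{z, x} | x. x \<in> W \<and> (adjacent H u x \<or> adjacent H v x)
                      \<and> \<not> ({u, x} \<in> black H \<and> {v, x} \<in> black H)}))"

definition contraction_step :: "'a trigraph \<Rightarrow> 'a trigraph \<Rightarrow> bool" where
  "contraction_step H H' \<longleftrightarrow>
     (\<exists>u v z. u \<in> verts H \<and> v \<in> verts H \<and> u \<noteq> v \<and> z \<notin> verts H - {u, v}
        \<and> H' = contract H u v z)"

text \<open>A d-sequence G = G_n, ..., G_1 is the list Hs with Hs!0 = G_n = G, ..., Hs!(n-1) = G_1.\<close>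
definition is_d_sequence :: "nat \<Rightarrow> 'a trigraph \<Rightarrow> 'a trigraph list \<Rightarrow> bool" where
  "is_d_sequence d G Hs \<longleftrightarrow>
     length Hs = card (verts G) \<and> Hs \<noteq> [] \<and> Hs ! 0 = G
     \<and> (\<forall>i < length Hs. is_d_trigraph d (Hs ! i))
     \<and> card (verts (last Hs)) = 1
     \<and> (\<forall>i. Suc i < length Hs \<longrightarrow> contraction_step (Hs ! i) (Hs ! Suc i))"

definition twin_width :: "'a trigraph \<Rightarrow> nat" where
  "twin_width G = (LEAST d. \<exists>Hs. is_d_sequence d G Hs)"

definition unit_interval_graph :: "'a trigraph \<Rightarrow> bool" where
  "unit_interval_graph G \<longleftrightarrow> is_graph G \<and> verts G \<noteq> {} \<and>
     (\<exists>(a :: 'a \<Rightarrow> real) (l :: real). l \<ge> 0 \<and>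
        (\<forall>x \<in> verts G. \<forall>y \<in> verts G. x \<noteq> y \<longrightarrow>
           ({x, y} \<in> black G \<longleftrightarrow> {a x .. a x + l} \<inter> {a y .. a y + l} \<noteq> {})))"

end

theory Submission
  imports Defs "HOL-Library.Product_Lexorder"
begin

text \<open>Rescale the intervals to length 1 and cut the line into the unit cells [c, c + 1).
  Each cell is a clique, only consecutive cells interact, and a vertex x of cell c is adjacent
  to a vertex y of cell c + 1 iff frac y \<le> frac x. Every trigraph of the sequence is a
  quotient of G, and a red edge only ever ends in the leader (vertex of least fractional part)
  of a neighbouring cell, so red degrees stay at most 2. In a first phase every vertex is
  absorbed into the leader of its cell, in increasing order of fractional part: a part that
  still sees a neighbouring cell partially must then be one of the leaders' parts. In a second
  phase the cells are merged from left to right.\<close>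

section \<open>Contractions and contraction sequences\<close>

lemma trigraph_eqI:
  "verts H = verts H' \<Longrightarrow> black H = black H' \<Longrightarrow> red H = red H' \<Longrightarrow> H = H'"
  by (simp add: verts_def black_def red_def prod_eq_iff)

lemma verts_contract: "verts (contract H u v z) = insert z (verts H - {u, v})"
  unfolding contract_def Let_def verts_def by simp

lemma edges_contract_doubletons:
  assumes "\<forall>e \<in> black H \<union> red H. \<exists>p q. e = {p, q}"
  shows "\<forall>e \<in> black (contract H u v z) \<union> red (contract H u v z). \<exists>p q. e = {p, q}"
  using assms unfolding contract_def Let_def black_def red_def by auto

lemma black_contract_iff:
  assumes "z \<notin> verts H - {u, v}"
  shows "{p, q} \<in> black (contract H u v z) \<longleftrightarrow>
     {p, q} \<in> black H \<and> p \<in> verts H - {u, v} \<and> q \<in> verts H - {u, v}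
     \<or> p = z \<and> q \<in> verts H - {u, v} \<and> {u, q} \<in> black H \<and> {v, q} \<in> black H
     \<or> q = z \<and> p \<in> verts H - {u, v} \<and> {u, p} \<in> black H \<and> {v, p} \<in> black H"
  using assms unfolding contract_def Let_def black_def by (auto simp: doubleton_eq_iff)

lemma red_contract_iff:
  assumes "z \<notin> verts H - {u, v}"
  shows "{p, q} \<in> red (contract H u v z) \<longleftrightarrow>
     {p, q} \<in> red H \<and> p \<in> verts H - {u, v} \<and> q \<in> verts H - {u, v}
     \<or> p = z \<and> q \<in> verts H - {u, v} \<and> (adjacent H u q \<or> adjacent H v q)
         \<and> \<not> ({u, q} \<in> black H \<and> {v, q} \<in> black H)
     \<or> q = z \<and> p \<in> verts H - {u, v} \<and> (adjacent H u p \<or> adjacent H v p)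
         \<and> \<not> ({u, p} \<in> black H \<and> {v, p} \<in> black H)"
  using assms unfolding contract_def Let_def red_def by (auto simp: doubleton_eq_iff)

lemma card_verts_contraction_step:
  assumes "finite (verts H)" "contraction_step H H'"
  shows "card (verts H) = Suc (card (verts H'))"
proof -
  obtain u v z where uv: "u \<in> verts H" "v \<in> verts H" "u \<noteq> v" "z \<notin> verts H - {u, v}"
    and H': "H' = contract H u v z"
    using assms(2) unfolding contraction_step_def by blast
  have "card (verts H') = Suc (card (verts H - {u, v}))"
    using uv(4) assms(1) unfolding H' verts_contract by simp
  also have "card (verts H - {u, v}) = card (verts H) - 2"
    using uv(1-3) assms(1) by (simp add: card_Diff_subset)
  finally show ?thesis
    using uv(1-3) assms(1) card_mono[of "verts H" "{u, v}"] by simp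
qed

lemma d_sequence_singleton:
  assumes "is_d_trigraph d H" "card (verts H) = 1"
  shows "is_d_sequence d H [H]"
  using assms unfolding is_d_sequence_def by auto

lemma d_sequence_Cons:
  assumes H: "is_d_trigraph d H" and step: "contraction_step H H'" and Hs: "is_d_sequence d H' Hs"
  shows "is_d_sequence d H (H # Hs)"
proof -
  have "card (verts H) = Suc (card (verts H'))"
    using H step by (intro card_verts_contraction_step) (auto simp: is_d_trigraph_def wf_trigraph_def)
  then show ?thesis
    using assms unfolding is_d_sequence_def by (auto simp: nth_Cons split: nat.splits)
qed

lemma twin_width_le: "is_d_sequence d G Hs \<Longrightarrow> twin_width G \<le> d"
  unfolding twin_width_def by (rule Least_le) blast

lemma red_degree_le_card:
  assumes "finite N" "\<And>y. {w, y} \<in> red H \<Longrightarrow> y \<in> N"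
  shows "red_degree H w \<le> card N"
  unfolding red_degree_def using assms by (intro card_mono) auto


section \<open>Quotient trigraphs\<close>

text \<open>The parts of the quotient are the fibres of f on V, the part of x being named f x;
  contracting two parts keeps one of the two names (contract_quotient).\<close>

definition some_edge_between :: "'a set \<Rightarrow> 'a set set \<Rightarrow> ('a \<Rightarrow> 'a) \<Rightarrow> 'a \<Rightarrow> 'a \<Rightarrow> bool" where
  "some_edge_between V E f p q \<longleftrightarrow> (\<exists>x\<in>V. \<exists>y\<in>V. f x = p \<and> f y = q \<and> {x, y} \<in> E)"

definition all_edges_between :: "'a set \<Rightarrow> 'a set set \<Rightarrow> ('a \<Rightarrow> 'a) \<Rightarrow> 'a \<Rightarrow> 'a \<Rightarrow> bool" where
  "all_edges_between V E f p q \<longleftrightarrow> (\<forall>x\<in>V. \<forall>y\<in>V. f x = p \<longrightarrow> f y = q \<longrightarrow> {x, y} \<in> E)"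

definition quotient_trigraph :: "'a set \<Rightarrow> 'a set set \<Rightarrow> ('a \<Rightarrow> 'a) \<Rightarrow> 'a trigraph" where
  "quotient_trigraph V E f =
     (f ` V,
      {{p, q} | p q. p \<in> f ` V \<and> q \<in> f ` V \<and> p \<noteq> q \<and> all_edges_between V E f p q},
      {{p, q} | p q. p \<in> f ` V \<and> q \<in> f ` V \<and> p \<noteq> q \<and> some_edge_between V E f p q
                     \<and> \<not> all_edges_between V E f p q})"

lemma some_edge_between_commute: "some_edge_between V E f p q = some_edge_between V E f q p"
  unfolding some_edge_between_def by (smt (verit) insert_commute)

lemma all_edges_between_commute: "all_edges_between V E f p q = all_edges_between V E f q p"
  unfolding all_edges_between_def by (smt (verit) insert_commute)

lemma all_edges_between_imp_some:
  "p \<in> f ` V \<Longrightarrow> q \<in> f ` V \<Longrightarrow> all_edges_between V E f p q \<Longrightarrow> some_edge_between V E f p q"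
  unfolding all_edges_between_def some_edge_between_def by blast

lemma verts_quotient [simp]: "verts (quotient_trigraph V E f) = f ` V"
  by (simp add: quotient_trigraph_def verts_def)

lemma doubleton_in_doubletons_iff:
  assumes "\<And>x y. P x y \<longleftrightarrow> P y x"
  shows "{p, q} \<in> {{x, y} | x y. P x y} \<longleftrightarrow> P p q"
  using assms by (auto simp: doubleton_eq_iff)

lemma doubleton_sets_eqI:
  assumes "\<forall>e\<in>A. \<exists>p q. e = {p, q}" "\<forall>e\<in>B. \<exists>p q. e = {p, q}" "\<And>p q. {p, q} \<in> A \<longleftrightarrow> {p, q} \<in> B"
  shows "A = B"
proof (intro set_eqI iffI)
  fix e assume "e \<in> A"
  moreover obtain p q where "e = {p, q}" using assms(1) \<open>e \<in> A\<close> by blast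
  ultimately show "e \<in> B" using assms(3) by simp
next
  fix e assume "e \<in> B"
  moreover obtain p q where "e = {p, q}" using assms(2) \<open>e \<in> B\<close> by blast
  ultimately show "e \<in> A" using assms(3) by simp
qed

lemma black_quotient_iff:
  "{p, q} \<in> black (quotient_trigraph V E f) \<longleftrightarrow>
     p \<in> f ` V \<and> q \<in> f ` V \<and> p \<noteq> q \<and> all_edges_between V E f p q"
  unfolding quotient_trigraph_def black_def snd_conv fst_conv
  by (rule doubleton_in_doubletons_iff) (auto simp: all_edges_between_commute)

lemma red_quotient_iff:
  "{p, q} \<in> red (quotient_trigraph V E f) \<longleftrightarrow>
     p \<in> f ` V \<and> q \<in> f ` V \<and> p \<noteq> q \<and> some_edge_between V E f p q \<and> \<not> all_edges_between V E f p q"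
  unfolding quotient_trigraph_def red_def snd_conv
  by (rule doubleton_in_doubletons_iff) (auto simp: all_edges_between_commute some_edge_between_commute)

lemma adjacent_quotient_iff:
  "adjacent (quotient_trigraph V E f) p q \<longleftrightarrow>
     p \<in> f ` V \<and> q \<in> f ` V \<and> p \<noteq> q \<and> some_edge_between V E f p q"
  unfolding adjacent_def using all_edges_between_imp_some[of p f V q E]
  by (auto simp: black_quotient_iff red_quotient_iff)

lemma edges_quotient_doubletons:
  "e \<in> black (quotient_trigraph V E f) \<union> red (quotient_trigraph V E f) \<Longrightarrow>
     \<exists>p q. e = {p, q} \<and> p \<in> f ` V \<and> q \<in> f ` V \<and> p \<noteq> q"
  unfolding quotient_trigraph_def black_def red_def by auto

lemma wf_quotient:
  assumes "finite V"
  shows "wf_trigraph (quotient_trigraph V E f)"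
proof -
  let ?Q = "quotient_trigraph V E f"
  have "e \<subseteq> f ` V \<and> card e = 2" if "e \<in> black ?Q \<union> red ?Q" for e
    using edges_quotient_doubletons[OF that] by auto
  moreover have "black ?Q \<inter> red ?Q = {}"
  proof (rule ccontr)
    assume "black ?Q \<inter> red ?Q \<noteq> {}"
    then obtain e where e: "e \<in> black ?Q" "e \<in> red ?Q" by blast
    then obtain p q where "e = {p, q}"
      using edges_quotient_doubletons[of e V E f] by blast
    with e show False by (simp add: black_quotient_iff red_quotient_iff)
  qed
  ultimately show ?thesis
    unfolding wf_trigraph_def using assms by simp
qed

lemma quotient_cong:
  assumes "\<And>x. x \<in> V \<Longrightarrow> f x = g x"
  shows "quotient_trigraph V E f = quotient_trigraph V E g"
proof -
  have "f ` V = g ` V" using assms by auto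
  moreover have "all_edges_between V E f = all_edges_between V E g"
    using assms unfolding all_edges_between_def by (intro ext) auto
  moreover have "some_edge_between V E f = some_edge_between V E g"
    using assms unfolding some_edge_between_def by (intro ext) auto
  ultimately show ?thesis unfolding quotient_trigraph_def by simp
qed

definition merge_parts :: "('a \<Rightarrow> 'a) \<Rightarrow> 'a \<Rightarrow> 'a \<Rightarrow> 'a \<Rightarrow> 'a" where
  "merge_parts f u v x = (if f x = v then u else f x)"

lemma merge_parts_eq_merged: "u \<noteq> v \<Longrightarrow> merge_parts f u v x = u \<longleftrightarrow> f x = u \<or> f x = v"
  unfolding merge_parts_def by auto

lemma merge_parts_eq_other: "p \<notin> {u, v} \<Longrightarrow> merge_parts f u v x = p \<longleftrightarrow> f x = p"
  unfolding merge_parts_def by auto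

lemma image_merge_parts:
  "u \<in> f ` V \<Longrightarrow> v \<in> f ` V \<Longrightarrow> merge_parts f u v ` V = insert u (f ` V - {u, v})"
  unfolding merge_parts_def by auto

lemma edges_between_merge_parts:
  assumes "u \<noteq> v" "q \<notin> {u, v}"
  shows "all_edges_between V E (merge_parts f u v) u q \<longleftrightarrow>
           all_edges_between V E f u q \<and> all_edges_between V E f v q"
    and "some_edge_between V E (merge_parts f u v) u q \<longleftrightarrow>
           some_edge_between V E f u q \<or> some_edge_between V E f v q"
  unfolding all_edges_between_def some_edge_between_def
  using merge_parts_eq_merged[OF assms(1)] merge_parts_eq_other[OF assms(2)] by auto

lemma edges_between_merge_parts_other:
  assumes "p \<notin> {u, v}" "q \<notin> {u, v}"
  shows "all_edges_between V E (merge_parts f u v) p q \<longleftrightarrow> all_edges_between V E f p q"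
    and "some_edge_between V E (merge_parts f u v) p q \<longleftrightarrow> some_edge_between V E f p q"
  unfolding all_edges_between_def some_edge_between_def
  using merge_parts_eq_other[OF assms(1)] merge_parts_eq_other[OF assms(2)] by auto

lemma named_pair_cases:
  assumes "u \<notin> W" and "\<And>p q. C p q \<longleftrightarrow> C q p"
    and "\<And>q. q \<in> W \<Longrightarrow> C u q \<longleftrightarrow> A q" and "\<And>p q. p \<in> W \<Longrightarrow> q \<in> W \<Longrightarrow> C p q \<longleftrightarrow> B p q"
  shows "p = u \<and> q \<in> W \<and> A q \<or> q = u \<and> p \<in> W \<and> A p \<or> p \<in> W \<and> q \<in> W \<and> p \<noteq> q \<and> B p q \<longleftrightarrow>
         p \<in> insert u W \<and> q \<in> insert u W \<and> p \<noteq> q \<and> C p q"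
  using assms by (cases "p = u"; cases "q = u") auto

lemma black_contract_quotient_iff:
  assumes u: "u \<in> f ` V" and v: "v \<in> f ` V" and "u \<noteq> v"
  shows "{p, q} \<in> black (contract (quotient_trigraph V E f) u v u) \<longleftrightarrow>
         {p, q} \<in> black (quotient_trigraph V E (merge_parts f u v))"
proof -
  let ?W = "f ` V - {u, v}"
  have fresh: "u \<notin> verts (quotient_trigraph V E f) - {u, v}" by simp
  have "{p, q} \<in> black (contract (quotient_trigraph V E f) u v u) \<longleftrightarrow>
      p = u \<and> q \<in> ?W \<and> all_edges_between V E f u q \<and> all_edges_between V E f v q
      \<or> q = u \<and> p \<in> ?W \<and> all_edges_between V E f u p \<and> all_edges_between V E f v p
      \<or> p \<in> ?W \<and> q \<in> ?W \<and> p \<noteq> q \<and> all_edges_between V E f p q"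
    unfolding black_contract_iff[OF fresh] black_quotient_iff verts_quotient using u v by blast
  also have "\<dots> \<longleftrightarrow> {p, q} \<in> black (quotient_trigraph V E (merge_parts f u v))"
    unfolding black_quotient_iff image_merge_parts[OF u v]
    by (rule named_pair_cases[OF _ all_edges_between_commute])
      (simp_all add: edges_between_merge_parts[OF \<open>u \<noteq> v\<close>] edges_between_merge_parts_other)
  finally show ?thesis .
qed

lemma red_contract_quotient_iff:
  assumes u: "u \<in> f ` V" and v: "v \<in> f ` V" and "u \<noteq> v"
  shows "{p, q} \<in> red (contract (quotient_trigraph V E f) u v u) \<longleftrightarrow>
         {p, q} \<in> red (quotient_trigraph V E (merge_parts f u v))"
proof -
  let ?W = "f ` V - {u, v}"
  have fresh: "u \<notin> verts (quotient_trigraph V E f) - {u, v}" by simp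
  have red_commute: "some_edge_between V E g p q \<and> \<not> all_edges_between V E g p q \<longleftrightarrow>
      some_edge_between V E g q p \<and> \<not> all_edges_between V E g q p" for g p q
    using some_edge_between_commute all_edges_between_commute by metis
  have "{p, q} \<in> red (contract (quotient_trigraph V E f) u v u) \<longleftrightarrow>
      p = u \<and> q \<in> ?W \<and> (some_edge_between V E f u q \<or> some_edge_between V E f v q)
        \<and> \<not> (all_edges_between V E f u q \<and> all_edges_between V E f v q)
      \<or> q = u \<and> p \<in> ?W \<and> (some_edge_between V E f u p \<or> some_edge_between V E f v p)
        \<and> \<not> (all_edges_between V E f u p \<and> all_edges_between V E f v p)
      \<or> p \<in> ?W \<and> q \<in> ?W \<and> p \<noteq> q \<and> some_edge_between V E f p q \<and> \<not> all_edges_between V E f p q"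
    unfolding red_contract_iff[OF fresh] red_quotient_iff black_quotient_iff
      adjacent_quotient_iff verts_quotient
    using u v by blast
  also have "\<dots> \<longleftrightarrow> {p, q} \<in> red (quotient_trigraph V E (merge_parts f u v))"
    unfolding red_quotient_iff image_merge_parts[OF u v]
    by (rule named_pair_cases[OF _ red_commute])
      (simp_all add: edges_between_merge_parts[OF \<open>u \<noteq> v\<close>] edges_between_merge_parts_other)
  finally show ?thesis .
qed

lemma contract_quotient:
  assumes u: "u \<in> f ` V" and v: "v \<in> f ` V" and "u \<noteq> v"
  shows "contract (quotient_trigraph V E f) u v u = quotient_trigraph V E (merge_parts f u v)"
proof -
  let ?C = "contract (quotient_trigraph V E f) u v u" and ?Q = "quotient_trigraph V E (merge_parts f u v)"
  have "\<forall>e \<in> black ?C \<union> red ?C. \<exists>p q. e = {p, q}"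
    using edges_quotient_doubletons by (intro edges_contract_doubletons) blast
  moreover have "\<forall>e \<in> black ?Q \<union> red ?Q. \<exists>p q. e = {p, q}"
    using edges_quotient_doubletons by blast
  ultimately show ?thesis
    using black_contract_quotient_iff[OF assms] red_contract_quotient_iff[OF assms]
    by (intro trigraph_eqI doubleton_sets_eqI) (auto simp: verts_contract image_merge_parts[OF u v])
qed

lemma contraction_step_quotient:
  assumes "u \<in> f ` V" "v \<in> f ` V" "u \<noteq> v" "\<And>x. x \<in> V \<Longrightarrow> g x = merge_parts f u v x"
  shows "contraction_step (quotient_trigraph V E f) (quotient_trigraph V E g)"
proof -
  have "quotient_trigraph V E g = contract (quotient_trigraph V E f) u v u"
    using contract_quotient[OF assms(1-3)] quotient_cong[of V g] assms(4) by simp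
  then show ?thesis
    unfolding contraction_step_def using assms(1-3) by auto
qed

lemma quotient_graph_id:
  assumes "is_graph G"
  shows "quotient_trigraph (verts G) (black G) (\<lambda>x. x) = G"
proof -
  let ?V = "verts G" and ?E = "black G" and ?Q = "quotient_trigraph (verts G) (black G) (\<lambda>x. x)"
  have edges: "e \<subseteq> ?V \<and> card e = 2" if "e \<in> ?E" for e
    using assms that unfolding is_graph_def wf_trigraph_def by auto
  have all_iff: "all_edges_between ?V ?E (\<lambda>x. x) p q \<longleftrightarrow> {p, q} \<in> ?E" if "p \<in> ?V" "q \<in> ?V" for p q
    using that unfolding all_edges_between_def by auto
  have "black ?Q = ?E"
  proof (rule doubleton_sets_eqI)
    show "\<forall>e\<in>?E. \<exists>p q. e = {p, q}"
      using edges by (metis card_2_iff)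
    show "{p, q} \<in> black ?Q \<longleftrightarrow> {p, q} \<in> ?E" for p q
      using edges[of "{p, q}"] all_iff by (auto simp: black_quotient_iff)
  qed (use edges_quotient_doubletons in blast)
  moreover have "red ?Q = {}"
    using edges_quotient_doubletons all_iff
    by (fastforce simp: red_quotient_iff some_edge_between_def)
  ultimately show ?thesis
    using assms by (intro trigraph_eqI) (auto simp: is_graph_def)
qed

section \<open>Unit interval graphs\<close>

lemma closed_intervals_meet_iff:
  fixes s t l :: real
  assumes "l \<ge> 0"
  shows "{s..s + l} \<inter> {t..t + l} \<noteq> {} \<longleftrightarrow> \<bar>s - t\<bar> \<le> l"
proof
  assume "{s..s + l} \<inter> {t..t + l} \<noteq> {}"
  then show "\<bar>s - t\<bar> \<le> l" by auto
next
  assume "\<bar>s - t\<bar> \<le> l"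
  then have "max s t \<in> {s..s + l} \<inter> {t..t + l}" using assms by (auto simp: max_def)
  then show "{s..s + l} \<inter> {t..t + l} \<noteq> {}" by blast
qed

lemma finite_threshold_gap:
  fixes D :: "real set"
  assumes "finite D"
  shows "\<exists>t > l. \<forall>d\<in>D. d \<le> l \<longleftrightarrow> d \<le> t"
proof (cases "{d\<in>D. l < d} = {}")
  case True
  then show ?thesis by (intro exI[of _ "l + 1"]) force
next
  case False
  define m where "m = Min {d\<in>D. l < d}"
  have "m \<in> {d\<in>D. l < d}" "\<And>d. d \<in> D \<Longrightarrow> l < d \<Longrightarrow> m \<le> d"
    using Min_in[OF _ False] Min_le[of "{d\<in>D. l < d}"] assms unfolding m_def by auto
  then show ?thesis by (intro exI[of _ "(l + m) / 2"]) force
qed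

lemma unit_interval_graph_normalized:
  assumes "unit_interval_graph G"
  obtains a :: "'a \<Rightarrow> real" where
    "\<And>x y. x \<in> verts G \<Longrightarrow> y \<in> verts G \<Longrightarrow> x \<noteq> y \<Longrightarrow> {x, y} \<in> black G \<longleftrightarrow> \<bar>a x - a y\<bar> \<le> 1"
proof -
  obtain a :: "'a \<Rightarrow> real" and l where l: "l \<ge> 0" and intervals:
    "\<forall>x\<in>verts G. \<forall>y\<in>verts G. x \<noteq> y \<longrightarrow> ({x, y} \<in> black G \<longleftrightarrow> {a x..a x + l} \<inter> {a y..a y + l} \<noteq> {})"
    using assms unfolding unit_interval_graph_def by blast
  have "finite (verts G)"
    using assms unfolding unit_interval_graph_def is_graph_def wf_trigraph_def by simp
  then have "finite ((\<lambda>(x, y). \<bar>a x - a y\<bar>) ` (verts G \<times> verts G))" by simp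
  from finite_threshold_gap[OF this, of l]
  obtain t where t: "t > l" and gap: "\<forall>d \<in> (\<lambda>(x, y). \<bar>a x - a y\<bar>) ` (verts G \<times> verts G). d \<le> l \<longleftrightarrow> d \<le> t"
    by blast
  show ?thesis
  proof (rule that[of "\<lambda>x. a x / t"])
    fix x y assume xy: "x \<in> verts G" "y \<in> verts G" "x \<noteq> y"
    have "{x, y} \<in> black G \<longleftrightarrow> \<bar>a x - a y\<bar> \<le> l"
      using intervals xy closed_intervals_meet_iff[OF l] by simp
    also have "\<dots> \<longleftrightarrow> \<bar>a x - a y\<bar> \<le> t"
      using gap xy by auto
    also have "\<dots> \<longleftrightarrow> \<bar>a x / t - a y / t\<bar> \<le> 1"
      using t l by (simp add: diff_divide_distrib[symmetric])
    finally show "{x, y} \<in> black G \<longleftrightarrow> \<bar>a x / t - a y / t\<bar> \<le> 1" .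
  qed
qed

locale unit_interval_model =
  fixes V :: "'a set" and E :: "'a set set" and a :: "'a \<Rightarrow> real"
  assumes finite_V: "finite V" and V_nonempty: "V \<noteq> {}"
    and edge_iff: "\<And>x y. x \<in> V \<Longrightarrow> y \<in> V \<Longrightarrow> x \<noteq> y \<Longrightarrow> {x, y} \<in> E \<longleftrightarrow> \<bar>a x - a y\<bar> \<le> 1"
begin

definition cell :: "'a \<Rightarrow> int" where
  "cell x = \<lfloor>a x\<rfloor>"

lemma a_eq_cell_frac: "a x = of_int (cell x) + frac (a x)"
  unfolding cell_def frac_def by simp

lemma same_cell_edge:
  assumes "x \<in> V" "y \<in> V" "x \<noteq> y" "cell x = cell y"
  shows "{x, y} \<in> E"
proof -
  have "\<bar>a x - a y\<bar> \<le> 1"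
    using assms(4) a_eq_cell_frac[of x] a_eq_cell_frac[of y] frac_lt_1[of "a x"] frac_lt_1[of "a y"]
      frac_ge_0[of "a x"] frac_ge_0[of "a y"] by linarith
  then show ?thesis using edge_iff assms(1-3) by blast
qed

lemma edge_cells_close:
  assumes "x \<in> V" "y \<in> V" "{x, y} \<in> E"
  shows "\<bar>cell x - cell y\<bar> \<le> 1"
proof (cases "x = y")
  case False
  then have "\<bar>a x - a y\<bar> \<le> 1" using assms edge_iff by blast
  then show ?thesis unfolding cell_def by linarith
qed simp

lemma next_cell_edge_iff:
  assumes "x \<in> V" "y \<in> V" "cell y = cell x + 1"
  shows "{x, y} \<in> E \<longleftrightarrow> frac (a y) \<le> frac (a x)"
proof -
  have "x \<noteq> y" using assms(3) by auto
  moreover have "a y - a x = 1 + frac (a y) - frac (a x)"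
    using a_eq_cell_frac[of x] a_eq_cell_frac[of y] assms(3) by simp
  ultimately show ?thesis
    using edge_iff[OF assms(1,2)] frac_lt_1[of "a x"] frac_lt_1[of "a y"]
      frac_ge_0[of "a x"] frac_ge_0[of "a y"] by auto
qed

definition leader :: "int \<Rightarrow> 'a" where
  "leader c = arg_min_on (\<lambda>x. frac (a x)) {x \<in> V. cell x = c}"

lemma
  assumes "c \<in> cell ` V"
  shows leader_in_V: "leader c \<in> V" and cell_leader: "cell (leader c) = c"
    and frac_leader_le: "\<And>y. y \<in> V \<Longrightarrow> cell y = c \<Longrightarrow> frac (a (leader c)) \<le> frac (a y)"
proof -
  have "finite {x \<in> V. cell x = c}" "{x \<in> V. cell x = c} \<noteq> {}"
    using finite_V assms by auto
  from arg_min_if_finite(1)[OF this] arg_min_least[OF this, of _ "\<lambda>x. frac (a x)"]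
  show "leader c \<in> V" "cell (leader c) = c" "\<And>y. y \<in> V \<Longrightarrow> cell y = c \<Longrightarrow> frac (a (leader c)) \<le> frac (a y)"
    unfolding leader_def by auto
qed

lemma is_d_trigraph_quotient:
  assumes "\<And>w y. {w, y} \<in> red (quotient_trigraph V E f) \<Longrightarrow> y = leader (cell y) \<and> \<bar>cell y - cell w\<bar> = 1"
  shows "is_d_trigraph 2 (quotient_trigraph V E f)"
proof -
  have "red_degree (quotient_trigraph V E f) w \<le> card {leader (cell w + 1), leader (cell w - 1)}" for w
  proof (rule red_degree_le_card)
    fix y assume "{w, y} \<in> red (quotient_trigraph V E f)"
    with assms have "y = leader (cell y)" "cell y = cell w + 1 \<or> cell y = cell w - 1" by fastforce+
    then show "y \<in> {leader (cell w + 1), leader (cell w - 1)}" by auto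
  qed simp
  moreover have "card {leader (cell w + 1), leader (cell w - 1)} \<le> 2" for w
    by (simp add: card_insert_if)
  ultimately have "red_degree (quotient_trigraph V E f) w \<le> 2" for w
    using order.trans by blast
  then show ?thesis
    unfolding is_d_trigraph_def using wf_quotient[OF finite_V] by simp
qed

text \<open>Vertices are absorbed by increasing fractional part; among equal ones the vertex of the
  higher cell goes first, which absorption_stage_right_absorbed relies on.\<close>

definition key :: "'a \<Rightarrow> real \<times> int" where
  "key x = (frac (a x), - cell x)"

definition absorb_map :: "'a set \<Rightarrow> 'a \<Rightarrow> 'a" where
  "absorb_map S x = (if x \<in> S then leader (cell x) else x)"

text \<open>The vertices of S have been absorbed into the leaders of their cells, in key order.\<close>

definition absorption_stage :: "'a set \<Rightarrow> bool" where
  "absorption_stage S \<longleftrightarrow> S \<subseteq> V \<and> leader ` cell ` V \<subseteq> S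
     \<and> (\<forall>q\<in>S. \<forall>p\<in>V - S. q \<noteq> leader (cell q) \<longrightarrow> key q \<le> key p)"

lemma cell_absorb_map: "x \<in> V \<Longrightarrow> cell (absorb_map S x) = cell x"
  unfolding absorb_map_def by (simp add: cell_leader)

lemma absorb_map_unabsorbed:
  assumes S: "absorption_stage S" and "x \<in> V" "x' \<in> V" "x \<notin> S" "absorb_map S x' = absorb_map S x"
  shows "x' = x"
proof (cases "x' \<in> S")
  case True
  then have "absorb_map S x' \<in> S"
    using S \<open>x' \<in> V\<close> unfolding absorption_stage_def absorb_map_def by auto
  then show ?thesis using assms(4,5) unfolding absorb_map_def by simp
qed (use assms(4,5) in \<open>simp add: absorb_map_def\<close>)

lemma absorption_stage_left_absorbed:
  assumes S: "absorption_stage S" and V: "x1 \<in> V" "x2 \<in> V" "y1 \<in> V" "y2 \<in> V"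
    and parts: "absorb_map S x2 = absorb_map S x1" "absorb_map S y2 = absorb_map S y1"
    and cells: "cell y2 = cell y1"
    and frac1: "frac (a y1) \<le> frac (a x1)" and frac2: "frac (a x2) < frac (a y2)"
  shows "x1 \<in> S"
proof (rule ccontr)
  assume "x1 \<notin> S"
  then have "x2 = x1" using absorb_map_unabsorbed S V parts by blast
  then have "y2 \<noteq> y1" using frac1 frac2 by auto
  then have "y2 \<in> S" using absorb_map_unabsorbed[OF S V(4,3) _ parts(2)[symmetric]] by blast
  show False
  proof (cases "y2 = leader (cell y2)")
    case True
    then have "frac (a y2) \<le> frac (a y1)"
      using frac_leader_le[of "cell y2" y1] V cells by (metis image_eqI)
    then show False using frac1 frac2 \<open>x2 = x1\<close> by simp
  next
    case False
    then have "key y2 \<le> key x1"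
      using S \<open>y2 \<in> S\<close> \<open>x1 \<notin> S\<close> V unfolding absorption_stage_def by blast
    then show False using frac2 \<open>x2 = x1\<close> unfolding key_def by auto
  qed
qed

lemma absorption_stage_right_absorbed:
  assumes S: "absorption_stage S" and V: "x1 \<in> V" "x2 \<in> V" "y1 \<in> V" "y2 \<in> V"
    and parts: "absorb_map S x2 = absorb_map S x1" "absorb_map S y2 = absorb_map S y1"
    and cells: "cell x2 = cell x1" "cell y1 = cell x1 + 1"
    and frac1: "frac (a y1) \<le> frac (a x1)" and frac2: "frac (a x2) < frac (a y2)"
  shows "y1 \<in> S"
proof (rule ccontr)
  assume "y1 \<notin> S"
  then have "y2 = y1" using absorb_map_unabsorbed S V parts by blast
  then have "x1 \<noteq> x2" using frac1 frac2 by auto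
  then have "x1 \<in> S" using absorb_map_unabsorbed[OF S V(1,2) _ parts(1)] by blast
  show False
  proof (cases "x1 = leader (cell x1)")
    case True
    then have "frac (a x1) \<le> frac (a x2)"
      using frac_leader_le[of "cell x1" x2] V cells by (metis image_eqI)
    then show False using frac1 frac2 \<open>y2 = y1\<close> by simp
  next
    case False
    then have "key x1 \<le> key y1"
      using S \<open>x1 \<in> S\<close> \<open>y1 \<notin> S\<close> V unfolding absorption_stage_def by blast
    then show False using frac1 cells(2) unfolding key_def by auto
  qed
qed

lemma absorption_stage_mixed_parts:
  assumes S: "absorption_stage S" and V: "x1 \<in> V" "x2 \<in> V" "y1 \<in> V" "y2 \<in> V"
    and parts: "absorb_map S x2 = absorb_map S x1" "absorb_map S y2 = absorb_map S y1"
    and next_cell: "cell y1 = cell x1 + 1" and edge: "{x1, y1} \<in> E" and non_edge: "{x2, y2} \<notin> E"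
  shows "x1 \<in> S \<and> y1 \<in> S"
proof -
  have cells: "cell x2 = cell x1" "cell y2 = cell y1"
    using parts cell_absorb_map V by metis+
  have "frac (a y1) \<le> frac (a x1)"
    using next_cell_edge_iff[of x1 y1] V next_cell edge by simp
  moreover have "frac (a x2) < frac (a y2)"
    using next_cell_edge_iff[of x2 y2] V next_cell non_edge cells by simp
  ultimately show ?thesis
    using absorption_stage_left_absorbed[OF S V parts cells(2)]
      absorption_stage_right_absorbed[OF S V parts cells(1) next_cell] by blast
qed

lemma absorption_stage_red_edge:
  assumes S: "absorption_stage S" and red: "{w, y} \<in> red (quotient_trigraph V E (absorb_map S))"
  shows "y = leader (cell y) \<and> \<bar>cell y - cell w\<bar> = 1"
proof -
  obtain x1 y1 x2 y2 where V: "x1 \<in> V" "x2 \<in> V" "y1 \<in> V" "y2 \<in> V"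
    and parts: "absorb_map S x1 = w" "absorb_map S x2 = w" "absorb_map S y1 = y" "absorb_map S y2 = y"
    and edge: "{x1, y1} \<in> E" and non_edge: "{x2, y2} \<notin> E" and "w \<noteq> y"
    using red unfolding red_quotient_iff some_edge_between_def all_edges_between_def by blast
  have cells: "cell x1 = cell w" "cell x2 = cell w" "cell y1 = cell y" "cell y2 = cell y"
    using parts V cell_absorb_map by metis+
  have "x2 \<noteq> y2" using parts \<open>w \<noteq> y\<close> by auto
  then have "cell w \<noteq> cell y"
    using same_cell_edge[OF V(2,4)] cells non_edge by auto
  moreover have "\<bar>cell w - cell y\<bar> \<le> 1"
    using edge_cells_close[OF V(1,3) edge] cells by simp
  ultimately consider "cell y1 = cell x1 + 1" | "cell x1 = cell y1 + 1"
    using cells by linarith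
  then have "y1 \<in> S"
  proof cases
    case 1
    then show ?thesis
      using absorption_stage_mixed_parts[OF S V _ _ 1 edge non_edge] parts by simp
  next
    case 2
    have "{y1, x1} \<in> E" "{y2, x2} \<notin> E" using edge non_edge by (simp_all add: insert_commute)
    from absorption_stage_mixed_parts[OF S V(3,4,1,2) _ _ 2 this] show ?thesis
      using parts by simp
  qed
  then have "y = leader (cell y)"
    using parts(3) cells(3) unfolding absorb_map_def by simp
  then show ?thesis
    using \<open>cell w \<noteq> cell y\<close> \<open>\<bar>cell w - cell y\<bar> \<le> 1\<close> by linarith
qed

definition merge_upto :: "int \<Rightarrow> 'a \<Rightarrow> 'a" where
  "merge_upto m x = leader (max (cell x) m)"

lemma merge_upto_leader:
  assumes "m \<in> cell ` V" "x \<in> V"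
  shows "cell (merge_upto m x) = max (cell x) m" and "merge_upto m x = leader (cell (merge_upto m x))"
proof -
  have "max (cell x) m \<in> cell ` V"
    using assms by (simp add: max_def)
  then show "cell (merge_upto m x) = max (cell x) m"
    unfolding merge_upto_def by (rule cell_leader)
  then show "merge_upto m x = leader (cell (merge_upto m x))"
    unfolding merge_upto_def by simp
qed

lemma merge_upto_red_edge:
  assumes m: "m \<in> cell ` V" and red: "{w, y} \<in> red (quotient_trigraph V E (merge_upto m))"
  shows "y = leader (cell y) \<and> \<bar>cell y - cell w\<bar> = 1"
proof -
  obtain x1 y1 where V: "x1 \<in> V" "y1 \<in> V" and parts: "merge_upto m x1 = w" "merge_upto m y1 = y"
    and edge: "{x1, y1} \<in> E" and "w \<noteq> y"
    using red unfolding red_quotient_iff some_edge_between_def by blast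
  have w: "cell w = max (cell x1) m" "w = leader (cell w)"
    and y: "cell y = max (cell y1) m" "y = leader (cell y)"
    using merge_upto_leader[OF m V(1)] merge_upto_leader[OF m V(2)] parts by auto
  have "cell w \<noteq> cell y"
    using w(2) y(2) \<open>w \<noteq> y\<close> by metis
  moreover have "\<bar>cell x1 - cell y1\<bar> \<le> 1"
    by (rule edge_cells_close[OF V edge])
  ultimately show ?thesis
    using w(1) y by (simp add: max_def split: if_splits; linarith)
qed

lemma merge_upto_contraction_step:
  assumes m: "m \<in> cell ` V" and m': "m' \<in> cell ` V" "m < m'"
    and next_cell: "\<And>c. c \<in> cell ` V \<Longrightarrow> m < c \<Longrightarrow> m' \<le> c"
  shows "contraction_step (quotient_trigraph V E (merge_upto m)) (quotient_trigraph V E (merge_upto m'))"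
proof -
  have "merge_upto m' x = merge_parts (merge_upto m) (leader m') (leader m) x" if "x \<in> V" for x
  proof (cases "cell x \<le> m")
    case False
    then have "cell (merge_upto m x) \<noteq> cell (leader m)"
      using merge_upto_leader(1)[OF m that] cell_leader[OF m] by simp
    then show ?thesis
      using False next_cell[of "cell x"] that unfolding merge_parts_def merge_upto_def
      by (auto simp: max_def)
  qed (use m' in \<open>auto simp: merge_parts_def merge_upto_def max_def\<close>)
  moreover have "leader m' \<in> merge_upto m ` V" "leader m \<in> merge_upto m ` V"
    using m m' leader_in_V cell_leader unfolding merge_upto_def by (force simp: max_def)+
  moreover have "leader m' \<noteq> leader m"
    using cell_leader[OF m'(1)] cell_leader[OF m] m'(2) by force
  ultimately show ?thesis
    by (intro contraction_step_quotient)
qed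

lemma merge_upto_d_sequence:
  "m \<in> cell ` V \<Longrightarrow> \<exists>Hs. is_d_sequence 2 (quotient_trigraph V E (merge_upto m)) Hs"
proof (induction "card {c \<in> cell ` V. m < c}" arbitrary: m rule: less_induct)
  case less
  let ?Q = "quotient_trigraph V E (merge_upto m)"
  have Q: "is_d_trigraph 2 ?Q"
    using is_d_trigraph_quotient merge_upto_red_edge[OF less.prems] by blast
  show ?case
  proof (cases "{c \<in> cell ` V. m < c} = {}")
    case True
    then have "merge_upto m x = leader m" if "x \<in> V" for x
      using that unfolding merge_upto_def by (fastforce simp: max_def)
    then have "verts ?Q = {leader m}" using V_nonempty by auto
    then show ?thesis using d_sequence_singleton[OF Q] by auto
  next
    case False
    define m' where "m' = Min {c \<in> cell ` V. m < c}"
    have m': "m' \<in> cell ` V" "m < m'" and next_cell: "\<And>c. c \<in> cell ` V \<Longrightarrow> m < c \<Longrightarrow> m' \<le> c"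
      using Min_in[OF _ False] Min_le[of "{c \<in> cell ` V. m < c}"] finite_V unfolding m'_def by auto
    have "card {c \<in> cell ` V. m' < c} < card {c \<in> cell ` V. m < c}"
      using m' finite_V by (intro psubset_card_mono) auto
    then obtain Hs where "is_d_sequence 2 (quotient_trigraph V E (merge_upto m')) Hs"
      using less.hyps m'(1) by blast
    then show ?thesis
      using d_sequence_Cons[OF Q merge_upto_contraction_step[OF less.prems m' next_cell]] by blast
  qed
qed

lemma absorption_stage_contraction_step:
  assumes S: "absorption_stage S" and "S \<noteq> V"
  obtains x where "x \<in> V - S" "absorption_stage (insert x S)"
    "contraction_step (quotient_trigraph V E (absorb_map S))
       (quotient_trigraph V E (absorb_map (insert x S)))"
proof -
  have SV: "S \<subseteq> V" "leader ` cell ` V \<subseteq> S"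
    using S unfolding absorption_stage_def by blast+
  then have "V - S \<noteq> {}" using \<open>S \<noteq> V\<close> by blast
  define x where "x = arg_min_on key (V - S)"
  have x: "x \<in> V - S" and x_least: "\<And>p. p \<in> V - S \<Longrightarrow> key x \<le> key p"
    using arg_min_if_finite(1)[of "V - S" key] arg_min_least[of "V - S" _ key] finite_V \<open>V - S \<noteq> {}\<close>
    unfolding x_def by auto
  define u where "u = leader (cell x)"
  have u: "u \<in> S" "cell u = cell x"
    using SV x cell_leader unfolding u_def by auto
  have "absorption_stage (insert x S)"
    using S x x_least unfolding absorption_stage_def by (auto simp: image_subset_iff)
  moreover have "absorb_map (insert x S) y = merge_parts (absorb_map S) u x y" if "y \<in> V" for y
    using that x SV unfolding merge_parts_def absorb_map_def u_def by auto
  moreover have "absorb_map S u = u" "absorb_map S x = x"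
    using u x unfolding absorb_map_def u_def by auto
  then have "u \<in> absorb_map S ` V" "x \<in> absorb_map S ` V"
    using u SV x by (metis image_eqI subsetD DiffD1)+
  moreover have "u \<noteq> x" using u x by auto
  ultimately show ?thesis
    using that x by (metis contraction_step_quotient)
qed

lemma absorption_stage_d_sequence:
  "absorption_stage S \<Longrightarrow> \<exists>Hs. is_d_sequence 2 (quotient_trigraph V E (absorb_map S)) Hs"
proof (induction "card (V - S)" arbitrary: S rule: less_induct)
  case less
  let ?Q = "quotient_trigraph V E (absorb_map S)"
  have Q: "is_d_trigraph 2 ?Q"
    using is_d_trigraph_quotient absorption_stage_red_edge[OF less.prems] by blast
  show ?case
  proof (cases "S = V")
    case True
    define m where "m = Min (cell ` V)"
    have "m \<in> cell ` V" "\<And>x. x \<in> V \<Longrightarrow> m \<le> cell x"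
      using finite_V V_nonempty unfolding m_def by auto
    moreover have "?Q = quotient_trigraph V E (merge_upto m)"
      using True calculation(2)
      by (intro quotient_cong) (simp add: absorb_map_def merge_upto_def max_absorb1)
    ultimately show ?thesis
      using merge_upto_d_sequence by simp
  next
    case False
    then obtain x where x: "x \<in> V - S" and stage: "absorption_stage (insert x S)"
      and step: "contraction_step ?Q (quotient_trigraph V E (absorb_map (insert x S)))"
      using absorption_stage_contraction_step[OF less.prems] by blast
    have "card (V - insert x S) < card (V - S)"
      using x finite_V by (metis Diff_insert card_Diff1_less finite_Diff)
    then obtain Hs where "is_d_sequence 2 (quotient_trigraph V E (absorb_map (insert x S))) Hs"
      using less.hyps stage by blast
    then show ?thesis
      using d_sequence_Cons[OF Q step] by blast
  qed
qed

lemma quotient_id_d_sequence: "\<exists>Hs. is_d_sequence 2 (quotient_trigraph V E (\<lambda>x. x)) Hs"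
proof -
  have "absorption_stage (leader ` cell ` V)"
    unfolding absorption_stage_def using leader_in_V cell_leader by auto
  moreover have "quotient_trigraph V E (absorb_map (leader ` cell ` V)) = quotient_trigraph V E (\<lambda>x. x)"
    by (intro quotient_cong) (auto simp: absorb_map_def cell_leader)
  ultimately show ?thesis
    using absorption_stage_d_sequence by metis
qed

end

theorem mainTheorem5:
  fixes G :: "'a trigraph"
  assumes "unit_interval_graph G"
  shows "twin_width G \<le> 2"
proof -
  obtain a :: "'a \<Rightarrow> real" where a:
    "\<And>x y. x \<in> verts G \<Longrightarrow> y \<in> verts G \<Longrightarrow> x \<noteq> y \<Longrightarrow> {x, y} \<in> black G \<longleftrightarrow> \<bar>a x - a y\<bar> \<le> 1"
    using unit_interval_graph_normalized[OF assms] by blast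
  have G: "is_graph G" "verts G \<noteq> {}"
    using assms unfolding unit_interval_graph_def by auto
  then interpret unit_interval_model "verts G" "black G" a
    using a by unfold_locales (auto simp: is_graph_def wf_trigraph_def)
  obtain Hs where "is_d_sequence 2 (quotient_trigraph (verts G) (black G) (\<lambda>x. x)) Hs"
    using quotient_id_d_sequence by blast
  then show ?thesis
    unfolding quotient_graph_id[OF G(1)] by (rule twin_width_le)
qed

end
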